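(* Let $k\geq 2$ and let $T_0,T_1,\dots,T_{k-1}$ be subtrees of a rooted arc-weighted tree $T$, with $T_k:=T_0$, such that $T_i$ does not overshadow $T_{i+1}$ for every $i=0,\dots,k-1$. Then the collection $\{T_1,\dots,T_k\}$ is not compatible, i.e., there are two trees in it neither of which overshadows the other.
   Context: $T$ is a rooted tree whose arcs carry positive integer weights; the depth of a node is the sum of arc weights on its path to the root. A subtree is a connected node set of $T$. For subtrees $T_1,T_2$, $T_1$ overshadows $T_2$ if every node of $T_2\setminus T_1$ has depth strictly greater than every node of $T_2\cap T_1$. Two subtrees are compatible if one overshadows the other; a collection is compatible if every two of its members are compatible. *)

theory Defs
  imports Main
begin

text \<open>The arc from a
  non-root node v to its parent par v carries the weight w v.\<close>

definition rooted_tree :: "'a set \<Rightarrow> 'a \<Rightarrow> ('a \<Rightarrow> 'a) \<Rightarrow> bool" where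
  "rooted_tree V r par \<longleftrightarrow> r \<in> V \<and> (\<forall>v\<in>V - {r}. par v \<in> V)
     \<and> (\<forall>v\<in>V. \<exists>n. (par ^^ n) v = r)"

definition positive_weights :: "'a set \<Rightarrow> 'a \<Rightarrow> ('a \<Rightarrow> nat) \<Rightarrow> bool" where
  "positive_weights V r w \<longleftrightarrow> (\<forall>v\<in>V - {r}. w v > 0)"

definition height :: "'a \<Rightarrow> ('a \<Rightarrow> 'a) \<Rightarrow> 'a \<Rightarrow> nat" where
  "height r par v = (LEAST n. (par ^^ n) v = r)"

definition depth :: "'a \<Rightarrow> ('a \<Rightarrow> 'a) \<Rightarrow> ('a \<Rightarrow> nat) \<Rightarrow> 'a \<Rightarrow> nat" where
  "depth r par w v = (\<Sum>i<height r par v. w ((par ^^ i) v))"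

definition adj_in :: "'a \<Rightarrow> ('a \<Rightarrow> 'a) \<Rightarrow> 'a set \<Rightarrow> 'a \<Rightarrow> 'a \<Rightarrow> bool" where
  "adj_in r par S x y \<longleftrightarrow> x \<in> S \<and> y \<in> S \<and> ((x \<noteq> r \<and> par x = y) \<or> (y \<noteq> r \<and> par y = x))"

definition subtree :: "'a set \<Rightarrow> 'a \<Rightarrow> ('a \<Rightarrow> 'a) \<Rightarrow> 'a set \<Rightarrow> bool" where
  "subtree V r par S \<longleftrightarrow> S \<subseteq> V \<and> S \<noteq> {} \<and>
     (\<forall>x\<in>S. \<forall>y\<in>S. (adj_in r par S)\<^sup>*\<^sup>* x y)"

definition overshadows :: "'a \<Rightarrow> ('a \<Rightarrow> 'a) \<Rightarrow> ('a \<Rightarrow> nat) \<Rightarrow> 'a set \<Rightarrow> 'a set \<Rightarrow> bool" where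
  "overshadows r par w T1 T2 \<longleftrightarrow>
     (\<forall>x\<in>T2 - T1. \<forall>y\<in>T2 \<inter> T1. depth r par w y < depth r par w x)"

definition compatible :: "'a \<Rightarrow> ('a \<Rightarrow> 'a) \<Rightarrow> ('a \<Rightarrow> nat) \<Rightarrow> 'a set set \<Rightarrow> bool" where
  "compatible r par w C \<longleftrightarrow>
     (\<forall>A\<in>C. \<forall>B\<in>C. overshadows r par w A B \<or> overshadows r par w B A)"

end

theory Submission
  imports Defs
begin

text \<open>If the collection were compatible, then T_(i+1) would overshadow T_i for every i,
  while each failure of T_i to overshadow T_(i+1) yields a node x_i of T_(i+1) - T_i
  no deeper than some common node y_i.  Cut every tree at the smallest depth h of the y_i:
  as T_(i+1) overshadows T_i, the part of T_i of depth at most h lies in T_(i+1).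
  Going once around the cycle, all these truncations coincide, yet the truncation of
  T_(j+1) contains x_j for the index j attaining h.\<close>

lemma cyclic_chain_subset:
  fixes S :: "nat \<Rightarrow> 'b set"
  assumes chain: "\<forall>i<k. S i \<subseteq> S ((i + 1) mod k)" and "i < k" and "j < k"
  shows "S i \<subseteq> S j"
proof -
  have walk: "S i \<subseteq> S ((i + n) mod k)" for n
  proof (induction n)
    case 0
    then show ?case using \<open>i < k\<close> by simp
  next
    case (Suc n)
    have "S ((i + n) mod k) \<subseteq> S (((i + n) mod k + 1) mod k)"
      using chain \<open>i < k\<close> by simp
    also have "((i + n) mod k + 1) mod k = (i + Suc n) mod k"
      by (simp add: mod_Suc_eq)
    finally show ?case using Suc by blast
  qed
  have "(i + (j + k - i)) mod k = j"
    using \<open>i < k\<close> \<open>j < k\<close> by simp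
  then show ?thesis using walk[of "j + k - i"] by simp
qed

lemma not_overshadows_witnesses:
  assumes "\<not> overshadows r par w A B"
  obtains x y where "x \<in> B - A" "y \<in> B \<inter> A" "depth r par w x \<le> depth r par w y"
proof -
  obtain x y where "x \<in> B - A" and "y \<in> B \<inter> A"
    and "\<not> depth r par w y < depth r par w x"
    using assms unfolding overshadows_def by blast
  then show thesis using that by simp
qed

lemma overshadows_truncation_subset:
  assumes "overshadows r par w A B" and "y \<in> B \<inter> A" and "h \<le> depth r par w y"
  shows "{v \<in> B. depth r par w v \<le> h} \<subseteq> A"
proof
  fix v assume v: "v \<in> {v \<in> B. depth r par w v \<le> h}"
  show "v \<in> A"
  proof (rule ccontr)
    assume "v \<notin> A"
    then have "depth r par w y < depth r par w v"
      using assms(1,2) v unfolding overshadows_def by blast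
    then show False using assms(3) v by simp
  qed
qed

lemma overshadows_cycle_impossible:
  fixes k :: nat and T :: "nat \<Rightarrow> 'a set"
  assumes "k > 0"
    and converse: "\<And>i. i < k \<Longrightarrow> overshadows r par w (T ((i + 1) mod k)) (T i)"
    and not_forward: "\<And>i. i < k \<Longrightarrow> \<not> overshadows r par w (T i) (T ((i + 1) mod k))"
  shows False
proof -
  let ?d = "depth r par w"
  have "\<exists>x y. x \<in> T ((i + 1) mod k) - T i \<and> y \<in> T ((i + 1) mod k) \<inter> T i
      \<and> ?d x \<le> ?d y" if "i < k" for i
    using not_forward[OF that] by (meson not_overshadows_witnesses)
  then obtain x y where xy: "\<And>i. i < k \<Longrightarrow> x i \<in> T ((i + 1) mod k) - T i
      \<and> y i \<in> T ((i + 1) mod k) \<inter> T i \<and> ?d (x i) \<le> ?d (y i)"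
    by metis
  obtain j where "j < k" and j_min: "\<And>i. i < k \<Longrightarrow> ?d (y j) \<le> ?d (y i)"
    using ex_has_least_nat[of "\<lambda>i. i < k" 0 "\<lambda>i. ?d (y i)"] \<open>k > 0\<close> by auto
  define S where "S i = {v \<in> T i. ?d v \<le> ?d (y j)}" for i
  have "S i \<subseteq> S ((i + 1) mod k)" if "i < k" for i
  proof -
    have "y i \<in> T i \<inter> T ((i + 1) mod k)" and "?d (y j) \<le> ?d (y i)"
      using xy[OF that] j_min[OF that] by auto
    then have "S i \<subseteq> T ((i + 1) mod k)"
      unfolding S_def by (rule overshadows_truncation_subset[OF converse[OF that]])
    then show ?thesis unfolding S_def by blast
  qed
  then have "S ((j + 1) mod k) \<subseteq> S j"
    using cyclic_chain_subset[of k S "(j + 1) mod k" j] \<open>j < k\<close> by simp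
  moreover have "x j \<in> S ((j + 1) mod k)" and "x j \<notin> T j"
    using xy[OF \<open>j < k\<close>] unfolding S_def by auto
  ultimately show False unfolding S_def by blast
qed

theorem lemma3:
  fixes V :: "'a set" and r :: 'a and par :: "'a \<Rightarrow> 'a" and w :: "'a \<Rightarrow> nat"
    and k :: nat and T :: "nat \<Rightarrow> 'a set"
  assumes "rooted_tree V r par"
    and "positive_weights V r w"
    and "k \<ge> 2"
    and "\<forall>i<k. subtree V r par (T i)"
    and "\<forall>i<k. \<not> overshadows r par w (T i) (T ((i + 1) mod k))"
  shows "\<not> compatible r par w (T ` {..<k})"
proof
  assume compatible: "compatible r par w (T ` {..<k})"
  have converse: "overshadows r par w (T ((i + 1) mod k)) (T i)" if "i < k" for i
  proof -
    have "T i \<in> T ` {..<k}" and "T ((i + 1) mod k) \<in> T ` {..<k}"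
      using that by auto
    then show ?thesis
      using compatible assms(5) that unfolding compatible_def by blast
  qed
  show False
    using converse assms(3,5) by (intro overshadows_cycle_impossible[of k r par w T]) auto
qed

end
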